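(* Let $Y_1,Y_2,\ldots$ be i.i.d. Bernoulli$(1/2)$ and let $(Z^k)_k$ be generated by the bit-drop scheme described in the context, independently of $(Y_i)$. For integers $l\ge 1,k\ge 0$ let $L^a_l(k)$ be the length of a longest common subsequence of $Z^k$ and $Y_1\ldots Y_l$. Let $\delta:\mathbb{R}\to\mathbb{R}$ be a function with $\lim_{\epsilon\to0}\delta(\epsilon)=0$ such that for every $\epsilon>0$ there exist $c,C>0$ with $P\big(L^a_l(\lfloor 2l(1-\delta(\epsilon))\rfloor)>l(1-\epsilon)\big)\le Ce^{-cl}$ for all $l>0$. Let $\epsilon>0$ be such that $$\frac{0.5}{1-\delta(\epsilon)}<0.65.$$ Define $E^n_3:=\bigcap_{l=\lceil0.2n\rceil}^n\{L^a_l(\lfloor 2l(1-\delta(\epsilon))\rfloor)\le(1-\epsilon)l\}$, $E^n_{4k}:=\{L^a_n(k)\ge 0.65k\}$, $E^n_4:=\bigcap_{k=\lceil 0.45n\rceil}^n E^n_{4k}$, and $$E^n_{6k}:=\{L^a_n(k)\leq(1-\epsilon)\,\eta(L^a_n(k))\ \text{for all }(\pi,\eta)\in M^k\},\qquad E^n_6:=\bigcap_{k=\lceil0.45n\rceil}^nE^n_{6k}.$$ Then for all $k>0.45n$ (with $k\le n$), $E^n_3\cap E^n_{4k}\subset E^n_{6k}$, and consequently $E^n_3\cap E^n_4\subset E^n_6$.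
   Context: Bit-drop scheme: let $V_1,V_2,\ldots$ be i.i.d. Bernoulli$(1/2)$ and let $T_3,T_4,\ldots$ be independent, independent of $(V_k)$, with $T_{k+1}$ uniform on $\{2,\ldots,k\}$. Set $Z^2:=V_1V_2$ and, given $Z^k=Z^k_1\ldots Z^k_k$, define $Z^{k+1}_j:=Z^k_j$ for $j<T_{k+1}$, $Z^{k+1}_{T_{k+1}}:=V_{k+1}$, $Z^{k+1}_j:=Z^k_{j-1}$ for $T_{k+1}<j\le k+1$. A pair of matching subsequences of $Z^k$ and $Y_1\ldots Y_n$ of length $m$ is a pair $(\pi,\eta)$ of strictly increasing maps $\pi:\{1,\ldots,m\}\to\{1,\ldots,k\}$, $\eta:\{1,\ldots,m\}\to\{1,\ldots,n\}$ with $Z^k_{\pi(i)}=Y_{\eta(i)}$ for all $i$. Let $M^k_2$ be the set of such pairs of maximal length (length $L^a_n(k)$). Order pairs of the same length componentwise: $(\pi_1,\eta_1)\le(\pi_2,\eta_2)$ iff $\pi_1(i)\le\pi_2(i)$ and $\eta_1(i)\le\eta_2(i)$ for all $i$. Let $M^k\subset M^k_2$ be the set of minimal elements of $M^k_2$ for this partial order. *)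

theory Defs
  imports "HOL-Probability.Probability"
begin

text \<open>Index type for the underlying random variables:
  IV i = V_i (i >= 1), IT k = T_k (k >= 3), IY i = Y_i (i >= 1). All take values in nat
  (bits are 0/1).\<close>
datatype idx = IV nat | IT nat | IY nat

fun bitdrop :: "(nat \<Rightarrow> nat) \<Rightarrow> (nat \<Rightarrow> nat) \<Rightarrow> nat \<Rightarrow> nat list" where
  "bitdrop V T k =
     (if k \<le> 2 then map V [1..<k+1]
      else (let Z = bitdrop V T (k - 1); t = T k
            in take (t - 1) Z @ V k # drop (t - 1) Z))"

definition is_match :: "nat list \<Rightarrow> nat list \<Rightarrow> nat \<Rightarrow> (nat \<Rightarrow> nat) \<Rightarrow> (nat \<Rightarrow> nat) \<Rightarrow> bool" where
  "is_match xs ys m \<pi> \<eta> \<longleftrightarrow>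
     strict_mono_on {1..m} \<pi> \<and> strict_mono_on {1..m} \<eta> \<and>
     \<pi> ` {1..m} \<subseteq> {1..length xs} \<and> \<eta> ` {1..m} \<subseteq> {1..length ys} \<and>
     (\<forall>i\<in>{1..m}. xs ! (\<pi> i - 1) = ys ! (\<eta> i - 1))"

definition lcs_len :: "nat list \<Rightarrow> nat list \<Rightarrow> nat" where
  "lcs_len xs ys = Max {m. \<exists>\<pi> \<eta>. is_match xs ys m \<pi> \<eta>}"

text \<open>M_2: matching pairs of maximal length; M: its minimal elements for the
  componentwise order (compared on the domain {1..m}).\<close>
definition M2 :: "nat list \<Rightarrow> nat list \<Rightarrow> ((nat \<Rightarrow> nat) \<times> (nat \<Rightarrow> nat)) set" where
  "M2 xs ys = {(\<pi>, \<eta>). is_match xs ys (lcs_len xs ys) \<pi> \<eta>}"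

definition pair_le :: "nat \<Rightarrow> (nat \<Rightarrow> nat) \<times> (nat \<Rightarrow> nat) \<Rightarrow> (nat \<Rightarrow> nat) \<times> (nat \<Rightarrow> nat) \<Rightarrow> bool" where
  "pair_le m p q \<longleftrightarrow> (\<forall>i\<in>{1..m}. fst p i \<le> fst q i \<and> snd p i \<le> snd q i)"

definition Mmin :: "nat list \<Rightarrow> nat list \<Rightarrow> ((nat \<Rightarrow> nat) \<times> (nat \<Rightarrow> nat)) set" where
  "Mmin xs ys = {p \<in> M2 xs ys. \<not> (\<exists>q\<in>M2 xs ys. pair_le (lcs_len xs ys) q p \<and>
                                          \<not> pair_le (lcs_len xs ys) p q)}"

definition Zk :: "(idx \<Rightarrow> 'a \<Rightarrow> nat) \<Rightarrow> 'a \<Rightarrow> nat \<Rightarrow> nat list" where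
  "Zk R \<omega> k = bitdrop (\<lambda>i. R (IV i) \<omega>) (\<lambda>i. R (IT i) \<omega>) k"

definition Yw :: "(idx \<Rightarrow> 'a \<Rightarrow> nat) \<Rightarrow> 'a \<Rightarrow> nat \<Rightarrow> nat list" where
  "Yw R \<omega> l = map (\<lambda>i. R (IY i) \<omega>) [1..<l+1]"

definition La :: "(idx \<Rightarrow> 'a \<Rightarrow> nat) \<Rightarrow> 'a \<Rightarrow> nat \<Rightarrow> nat \<Rightarrow> nat" where
  "La R \<omega> l k = lcs_len (Zk R \<omega> k) (Yw R \<omega> l)"

definition E3 :: "'a measure \<Rightarrow> (idx \<Rightarrow> 'a \<Rightarrow> nat) \<Rightarrow> real \<Rightarrow> real \<Rightarrow> nat \<Rightarrow> 'a set" where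
  "E3 M R d \<epsilon> n = {\<omega> \<in> space M. \<forall>l. nat \<lceil>0.2 * real n\<rceil> \<le> l \<and> l \<le> n \<longrightarrow>
      real (La R \<omega> l (nat \<lfloor>2 * real l * (1 - d)\<rfloor>)) \<le> (1 - \<epsilon>) * real l}"

definition E4k :: "'a measure \<Rightarrow> (idx \<Rightarrow> 'a \<Rightarrow> nat) \<Rightarrow> nat \<Rightarrow> nat \<Rightarrow> 'a set" where
  "E4k M R n k = {\<omega> \<in> space M. real (La R \<omega> n k) \<ge> 0.65 * real k}"

definition E4 :: "'a measure \<Rightarrow> (idx \<Rightarrow> 'a \<Rightarrow> nat) \<Rightarrow> nat \<Rightarrow> 'a set" where
  "E4 M R n = space M \<inter> (\<Inter>k\<in>{nat \<lceil>0.45 * real n\<rceil>..n}. E4k M R n k)"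

definition E6k :: "'a measure \<Rightarrow> (idx \<Rightarrow> 'a \<Rightarrow> nat) \<Rightarrow> real \<Rightarrow> nat \<Rightarrow> nat \<Rightarrow> 'a set" where
  "E6k M R \<epsilon> n k = {\<omega> \<in> space M. \<forall>(\<pi>, \<eta>) \<in> Mmin (Zk R \<omega> k) (Yw R \<omega> n).
      real (La R \<omega> n k) \<le> (1 - \<epsilon>) * real (\<eta> (La R \<omega> n k))}"

definition E6 :: "'a measure \<Rightarrow> (idx \<Rightarrow> 'a \<Rightarrow> nat) \<Rightarrow> real \<Rightarrow> nat \<Rightarrow> 'a set" where
  "E6 M R \<epsilon> n = space M \<inter> (\<Inter>k\<in>{nat \<lceil>0.45 * real n\<rceil>..n}. E6k M R \<epsilon> n k)"

definition used_idx :: "idx set" where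
  "used_idx = {IV i | i. i \<ge> 1} \<union> {IT k | k. k \<ge> 3} \<union> {IY i | i. i \<ge> 1}"

end

theory Submission
  imports Defs
begin

text \<open>Let L = L^a_n(k), let (\<pi>, \<eta>) be a maximal-length matching pair of Z^k and
  Y_1 ... Y_n, and put l = \<eta>(L) \<ge> L. The pair only uses Y_1 ... Y_l, and Z^k is a subsequence
  of every later Z^k', so L \<le> L^a_l(k') for all k' \<ge> k. On E_4k we have l \<ge> L \<ge> 0.65 k;
  the hypothesis 0.5 / (1 - \<delta>(\<epsilon>)) < 0.65 then gives k' = \<lfloor>2 l (1 - \<delta>(\<epsilon>))\<rfloor> \<ge> k,
  and l \<ge> 0.65 * 0.45 n \<ge> 0.2 n. So E_3 applies to l and yields L \<le> (1 - \<epsilon>) l.\<close>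

declare bitdrop.simps[simp del]

lemma card_le_of_strict_mono_on:
  fixes f :: "nat \<Rightarrow> nat"
  assumes "strict_mono_on {1..m} f" "f ` {1..m} \<subseteq> {1..b}"
  shows "m \<le> b"
  using card_inj_on_le[OF strict_mono_on_imp_inj_on[OF assms(1)] assms(2)] by simp

lemma is_match_le_length: "is_match xs ys m \<pi> \<eta> \<Longrightarrow> m \<le> length xs"
  unfolding is_match_def by (elim conjE) (rule card_le_of_strict_mono_on)

lemma is_match_le_lcs_len: "is_match xs ys m \<pi> \<eta> \<Longrightarrow> m \<le> lcs_len xs ys"
  unfolding lcs_len_def
  by (rule Max_ge) (auto intro: finite_subset[of _ "{..length xs}"] dest: is_match_le_length)

lemma is_match_snd_image:
  assumes "is_match xs ys m \<pi> \<eta>"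
  shows "\<eta> ` {1..m} \<subseteq> {1..\<eta> m}"
proof
  fix y assume "y \<in> \<eta> ` {1..m}"
  then obtain i where i: "i \<in> {1..m}" "y = \<eta> i" by blast
  have mono: "strict_mono_on {1..m} \<eta>" and "\<eta> ` {1..m} \<subseteq> {1..length ys}"
    using assms unfolding is_match_def by auto
  then have "1 \<le> \<eta> i" using i(1) by (auto simp: image_subset_iff)
  moreover have "\<eta> i \<le> \<eta> m"
    using i strict_mono_on_leD[OF mono] by auto
  ultimately show "y \<in> {1..\<eta> m}" using i by simp
qed

lemma is_match_le_snd_last: "is_match xs ys m \<pi> \<eta> \<Longrightarrow> m \<le> \<eta> m"
  by (rule card_le_of_strict_mono_on[OF _ is_match_snd_image]) (auto simp: is_match_def)

lemma is_match_snd_last_le_length: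
  "is_match xs ys m \<pi> \<eta> \<Longrightarrow> 1 \<le> m \<Longrightarrow> \<eta> m \<le> length ys"
  unfolding is_match_def by (auto simp: image_subset_iff)

lemma is_match_take_right:
  assumes "is_match xs ys m \<pi> \<eta>" "\<eta> m \<le> l"
  shows "is_match xs (take l ys) m \<pi> \<eta>"
  using assms is_match_snd_image[OF assms(1)] unfolding is_match_def
  by (fastforce simp: image_subset_iff)

lemma is_match_insert_left:
  assumes "is_match xs ys m \<pi> \<eta>"
  shows "\<exists>\<pi>'. is_match (take a xs @ x # drop a xs) ys m \<pi>' \<eta>"
proof
  define s where "s p = (if p \<le> a then p else Suc p)" for p
  have "strict_mono s" unfolding strict_mono_def s_def by auto
  have nth_shift: "(take a xs @ x # drop a xs) ! (s p - 1) = xs ! (p - 1)"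
    if "1 \<le> p" "p \<le> length xs" for p
    using that by (cases "p \<le> a") (auto simp: s_def nth_append min_def Suc_diff_le)
  show "is_match (take a xs @ x # drop a xs) ys m (s \<circ> \<pi>) \<eta>"
    using assms unfolding is_match_def
  proof (elim conjE, intro conjI ballI)
    assume "strict_mono_on {1..m} \<pi>"
    then show "strict_mono_on {1..m} (s \<circ> \<pi>)"
      using \<open>strict_mono s\<close> by (auto intro!: strict_mono_onI dest: strict_mono_onD strict_monoD)
  next
    assume "\<pi> ` {1..m} \<subseteq> {1..length xs}"
    then show "(s \<circ> \<pi>) ` {1..m} \<subseteq> {1..length (take a xs @ x # drop a xs)}"
      by (force simp: s_def)
  next
    fix i assume "i \<in> {1..m}" "\<pi> ` {1..m} \<subseteq> {1..length xs}"
      "\<forall>i\<in>{1..m}. xs ! (\<pi> i - 1) = ys ! (\<eta> i - 1)"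
    then show "(take a xs @ x # drop a xs) ! ((s \<circ> \<pi>) i - 1) = ys ! (\<eta> i - 1)"
      using nth_shift[of "\<pi> i"] by force
  qed
qed

lemma length_bitdrop: "length (bitdrop V T k) = k"
  by (induction k) (subst bitdrop.simps; auto simp: Let_def min_def)+

lemma bitdrop_Suc_insert:
  "\<exists>a. bitdrop V T (Suc k) = take a (bitdrop V T k) @ V (Suc k) # drop a (bitdrop V T k)"
proof (cases "Suc k \<le> 2")
  case True
  then have "bitdrop V T (Suc k) = bitdrop V T k @ [V (Suc k)]"
    by (simp add: bitdrop.simps[of V T "Suc k"] bitdrop.simps[of V T k])
  then show ?thesis using length_bitdrop[of V T k] by (intro exI[of _ k]) simp
next
  case False
  then show ?thesis by (subst bitdrop.simps) (auto simp: Let_def)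
qed

lemma is_match_bitdrop_mono:
  assumes "k \<le> k'" "is_match (bitdrop V T k) ys m \<pi> \<eta>"
  shows "\<exists>\<pi>'. is_match (bitdrop V T k') ys m \<pi>' \<eta>"
  using assms(1)
proof (induction k' rule: dec_induct)
  case base
  then show ?case using assms(2) by blast
next
  case (step j)
  then show ?case using bitdrop_Suc_insert is_match_insert_left by metis
qed

lemma take_Yw: "l \<le> n \<Longrightarrow> take l (Yw R \<omega> n) = Yw R \<omega> l"
  unfolding Yw_def take_map by (simp add: take_upt del: upt_Suc)

lemma length_Yw: "length (Yw R \<omega> n) = n"
  by (simp add: Yw_def)

lemma le_La_at_snd_last:
  assumes "is_match (Zk R \<omega> k) (Yw R \<omega> n) m \<pi> \<eta>" "k \<le> k'" "\<eta> m \<le> n"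
  shows "m \<le> La R \<omega> (\<eta> m) k'"
proof -
  have "is_match (Zk R \<omega> k) (Yw R \<omega> (\<eta> m)) m \<pi> \<eta>"
    using is_match_take_right[OF assms(1) order_refl] by (simp add: take_Yw[OF assms(3)])
  then obtain \<pi>' where "is_match (Zk R \<omega> k') (Yw R \<omega> (\<eta> m)) m \<pi>' \<eta>"
    using is_match_bitdrop_mono[OF assms(2)] unfolding Zk_def by blast
  then show ?thesis unfolding La_def by (rule is_match_le_lcs_len)
qed

lemma le_nat_floor_stretch:
  fixes d :: real
  assumes "d < 1" "0.5 / (1 - d) < 0.65" "0.65 * real k \<le> real l"
  shows "k \<le> nat \<lfloor>2 * real l * (1 - d)\<rfloor>"
proof -
  have "0.5 < 0.65 * (1 - d)" using assms(1,2) by (simp add: field_simps)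
  then have "real k * 1 \<le> real k * (1.3 * (1 - d))"
    by (intro mult_left_mono) auto
  then have "real k \<le> 2 * (0.65 * real k) * (1 - d)" by (simp add: algebra_simps)
  also have "\<dots> \<le> 2 * real l * (1 - d)" using assms(1,3) by (simp add: mult_right_mono)
  finally show ?thesis by (simp add: le_nat_iff le_floor_iff)
qed

lemma E3_Int_E4k_subset_E6k:
  fixes d \<epsilon> :: real
  assumes "d < 1" "0.5 / (1 - d) < 0.65" "0.45 * real n \<le> real k" "0 < k" "k \<le> n"
  shows "E3 M R d \<epsilon> n \<inter> E4k M R n k \<subseteq> E6k M R \<epsilon> n k"
proof
  fix \<omega> assume \<omega>: "\<omega> \<in> E3 M R d \<epsilon> n \<inter> E4k M R n k"
  define L where "L = La R \<omega> n k"
  have L_ge: "0.65 * real k \<le> real L" using \<omega> unfolding E4k_def L_def by auto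
  then have "1 \<le> L" using assms(4) by (cases L) auto
  have "real L \<le> (1 - \<epsilon>) * real (\<eta> L)"
    if "(\<pi>, \<eta>) \<in> Mmin (Zk R \<omega> k) (Yw R \<omega> n)" for \<pi> \<eta>
  proof -
    define l where "l = \<eta> L"
    have match: "is_match (Zk R \<omega> k) (Yw R \<omega> n) L \<pi> \<eta>"
      using that unfolding Mmin_def M2_def L_def La_def by auto
    have "l \<le> n" "L \<le> l"
      using is_match_snd_last_le_length[OF match \<open>1 \<le> L\<close>] is_match_le_snd_last[OF match]
      by (simp_all add: l_def length_Yw)
    have k_le: "k \<le> nat \<lfloor>2 * real l * (1 - d)\<rfloor>"
      using le_nat_floor_stretch[OF assms(1,2)] L_ge \<open>L \<le> l\<close> by simp
    have "0.2 * real n \<le> 0.65 * (0.45 * real n)" by simp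
    also have "\<dots> \<le> 0.65 * real k" using assms(3) by (intro mult_left_mono) auto
    also have "\<dots> \<le> real l" using L_ge \<open>L \<le> l\<close> by linarith
    finally have "nat \<lceil>0.2 * real n\<rceil> \<le> l" by (simp add: nat_le_iff ceiling_le_iff)
    then have "real (La R \<omega> l (nat \<lfloor>2 * real l * (1 - d)\<rfloor>)) \<le> (1 - \<epsilon>) * real l"
      using \<omega> \<open>l \<le> n\<close> unfolding E3_def by blast
    moreover have "L \<le> La R \<omega> l (nat \<lfloor>2 * real l * (1 - d)\<rfloor>)"
      using le_La_at_snd_last[OF match k_le] \<open>l \<le> n\<close> by (simp add: l_def)
    ultimately show ?thesis by (simp add: l_def)
  qed
  then show "\<omega> \<in> E6k M R \<epsilon> n k"
    using \<omega> unfolding E6k_def E4k_def L_def by auto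
qed

theorem lemma9:
  fixes M :: "'a measure" and R :: "idx \<Rightarrow> 'a \<Rightarrow> nat"
    and \<delta> :: "real \<Rightarrow> real" and \<epsilon> :: real and n :: nat
  assumes "prob_space M"
    and "prob_space.indep_vars M (\<lambda>_. count_space UNIV) R used_idx"
    and "\<And>i. i \<ge> 1 \<Longrightarrow> distr M (count_space UNIV) (R (IV i)) = measure_pmf (pmf_of_set {0, 1})"
    and "\<And>i. i \<ge> 1 \<Longrightarrow> distr M (count_space UNIV) (R (IY i)) = measure_pmf (pmf_of_set {0, 1})"
    and "\<And>k. k \<ge> 3 \<Longrightarrow> distr M (count_space UNIV) (R (IT k)) = measure_pmf (pmf_of_set {2..k - 1})"
    and "(\<delta> \<longlongrightarrow> 0) (at 0)"
    and "\<forall>e>0. \<exists>c>0. \<exists>C>0. \<forall>l::nat>0.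
           measure M {\<omega> \<in> space M. real (La R \<omega> l (nat \<lfloor>2 * real l * (1 - \<delta> e)\<rfloor>)) > real l * (1 - e)}
             \<le> C * exp (- c * real l)"
    and "\<epsilon> > 0" and "\<delta> \<epsilon> < 1" and "0.5 / (1 - \<delta> \<epsilon>) < (0.65::real)"
    and "n \<ge> 1"
  shows "(\<forall>k. 0.45 * real n < real k \<and> k \<le> n \<longrightarrow>
            E3 M R (\<delta> \<epsilon>) \<epsilon> n \<inter> E4k M R n k \<subseteq> E6k M R \<epsilon> n k)
       \<and> E3 M R (\<delta> \<epsilon>) \<epsilon> n \<inter> E4 M R n \<subseteq> E6 M R \<epsilon> n"
proof -
  have per_k: "E3 M R (\<delta> \<epsilon>) \<epsilon> n \<inter> E4k M R n k \<subseteq> E6k M R \<epsilon> n k"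
    if "0.45 * real n \<le> real k" "k \<le> n" for k
  proof (rule E3_Int_E4k_subset_E6k[OF assms(9,10) that(1) _ that(2)])
    show "0 < k" using that(1) \<open>n \<ge> 1\<close> by (cases k) auto
  qed
  have "E3 M R (\<delta> \<epsilon>) \<epsilon> n \<inter> E4 M R n \<subseteq> E6 M R \<epsilon> n"
    using per_k unfolding E4_def E6_def by (fastforce simp: ceiling_le_iff nat_le_iff)
  then show ?thesis using per_k by auto
qed

end
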